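(* Let $A\in H_n$ and $B\in H_m$ have eigenvalues $a_1,\dots,a_n$ and $b_1,\dots,b_m$, respectively, and set $\mathbf a=(a_1,\dots,a_n)$, $\mathbf b=(b_1,\dots,b_m)$. The following are equivalent: (a) there is a completely positive map $\Phi:M_n\to M_m$ with $\Phi(A)=B$; (b) there is an $n\times m$ nonnegative matrix $D$ with $\mathbf b=\mathbf aD$; (c) there are real numbers $\gamma_1,\gamma_2\ge0$ such that $\gamma_2\min_i a_i\le b_j\le\gamma_1\max_i a_i$ for all $1\le j\le m$. Likewise, the following are equivalent: (a') there is a unital completely positive map $\Phi:M_n\to M_m$ with $\Phi(A)=B$; (b') there is an $n\times m$ column stochastic matrix $D$ with $\mathbf b=\mathbf aD$; (c') $\min_i a_i\le b_j\le\max_i a_i$ for all $1\le j\le m$.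
   Context: $H_n$ is the set of $n\times n$ Hermitian matrices. A linear map is completely positive if all its ampliations $I_k\otimes\Phi$ preserve positive semidefiniteness; unital means $\Phi(I_n)=I_m$. A column stochastic matrix is a nonnegative matrix each of whose columns sums to 1. *)

theory Defs
  imports "Jordan_Normal_Form.Char_Poly"
begin

definition hermitian_mat :: "nat \<Rightarrow> complex mat \<Rightarrow> bool" where
  "hermitian_mat n A \<longleftrightarrow> A \<in> carrier_mat n n \<and>
     (\<forall>i<n. \<forall>j<n. A $$ (i, j) = cnj (A $$ (j, i)))"

definition psd_mat :: "nat \<Rightarrow> complex mat \<Rightarrow> bool" where
  "psd_mat d X \<longleftrightarrow> X \<in> carrier_mat d d \<and>
     (\<forall>v \<in> carrier_vec d.
        let q = (\<Sum>i<d. \<Sum>j<d. cnj (v $ i) * X $$ (i, j) * v $ j) in Im q = 0 \<and> Re q \<ge> 0)"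

definition linear_map_mat :: "nat \<Rightarrow> nat \<Rightarrow> (complex mat \<Rightarrow> complex mat) \<Rightarrow> bool" where
  "linear_map_mat n m \<Phi> \<longleftrightarrow>
     (\<forall>X \<in> carrier_mat n n. \<Phi> X \<in> carrier_mat m m) \<and>
     (\<forall>X \<in> carrier_mat n n. \<forall>Y \<in> carrier_mat n n. \<Phi> (X + Y) = \<Phi> X + \<Phi> Y) \<and>
     (\<forall>c. \<forall>X \<in> carrier_mat n n. \<Phi> (c \<cdot>\<^sub>m X) = c \<cdot>\<^sub>m \<Phi> X)"

text \<open>Ampliation I_k \<otimes> Phi : M_k(M_n) \<rightarrow> M_k(M_m): a (k n) x (k n) matrix X is viewed as a
  k x k block matrix with n x n blocks X_pq (entry (p*n+r, q*n+s)), and Phi is applied blockwise.\<close>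
definition ampliation :: "nat \<Rightarrow> nat \<Rightarrow> nat \<Rightarrow> (complex mat \<Rightarrow> complex mat) \<Rightarrow> complex mat \<Rightarrow> complex mat" where
  "ampliation k n m \<Phi> X = mat (k * m) (k * m) (\<lambda>(i, j).
     \<Phi> (mat n n (\<lambda>(r, s). X $$ ((i div m) * n + r, (j div m) * n + s))) $$ (i mod m, j mod m))"

definition completely_positive :: "nat \<Rightarrow> nat \<Rightarrow> (complex mat \<Rightarrow> complex mat) \<Rightarrow> bool" where
  "completely_positive n m \<Phi> \<longleftrightarrow> linear_map_mat n m \<Phi> \<and>
     (\<forall>k. \<forall>X. psd_mat (k * n) X \<longrightarrow> psd_mat (k * m) (ampliation k n m \<Phi> X))"

definition unital :: "nat \<Rightarrow> nat \<Rightarrow> (complex mat \<Rightarrow> complex mat) \<Rightarrow> bool" where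
  "unital n m \<Phi> \<longleftrightarrow> \<Phi> (1\<^sub>m n) = 1\<^sub>m m"

definition eigenvalues_are :: "nat \<Rightarrow> complex mat \<Rightarrow> (nat \<Rightarrow> real) \<Rightarrow> bool" where
  "eigenvalues_are n A a \<longleftrightarrow> char_poly A = (\<Prod>i<n. [:- complex_of_real (a i), 1:])"

definition nonneg_mat :: "nat \<Rightarrow> nat \<Rightarrow> real mat \<Rightarrow> bool" where
  "nonneg_mat n m D \<longleftrightarrow> D \<in> carrier_mat n m \<and> (\<forall>i<n. \<forall>j<m. D $$ (i, j) \<ge> 0)"

definition column_stochastic :: "nat \<Rightarrow> nat \<Rightarrow> real mat \<Rightarrow> bool" where
  "column_stochastic n m D \<longleftrightarrow> nonneg_mat n m D \<and> (\<forall>j<m. (\<Sum>i<n. D $$ (i, j)) = 1)"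

definition row_times :: "nat \<Rightarrow> nat \<Rightarrow> (nat \<Rightarrow> real) \<Rightarrow> real mat \<Rightarrow> (nat \<Rightarrow> real) \<Rightarrow> bool" where
  "row_times n m a D b \<longleftrightarrow> (\<forall>j<m. b j = (\<Sum>i<n. a i * D $$ (i, j)))"

end

theory Submission
  imports Defs "Jordan_Normal_Form.Schur_Decomposition" "Jordan_Normal_Form.Spectral_Radius"
begin

(* Everything reduces to
   two facts about spectra:
   - Necessity.  If s a_i + t >= 0 for all i, then sA + tI is positive semidefinite (spectral
     theorem); a completely positive map Phi with Phi(A) = B, unital when t <> 0, sends it to the
     positive semidefinite matrix sB + tI, so s b_j + t >= 0 for all j.  With (s,t) = (+-1, 0)
     this says that b keeps the sign of a whenever a has constant sign ("sign compatibility");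
     with the unital shifts A - (min a) I and (max a) I - A it gives min a <= b_j <= max a.
   - Sufficiency.  Given a nonnegative D with b = aD, the measure-and-prepare map
       X |-> sum_{i,l} D_{i,sigma(l)} <x_i, X x_i> v_l v_l^*
     (x_i unit eigenvectors of A, B = sum_l b_{sigma(l)} v_l v_l^* a spectral decomposition) is
     completely positive, sends A to B, and is unital when D is column stochastic. *)

section \<open>Adjoints and unitary matrices\<close>

definition adj :: "complex mat \<Rightarrow> complex mat" where
  "adj M = mat (dim_col M) (dim_row M) (\<lambda>(i,j). cnj (M $$ (j,i)))"

lemma adj_dims[simp]: "dim_row (adj M) = dim_col M" "dim_col (adj M) = dim_row M"
  by (auto simp: adj_def)

lemma adj_carrier[simp]: "M \<in> carrier_mat n k \<Longrightarrow> adj M \<in> carrier_mat k n"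
  by (auto simp: adj_def)

lemma adj_index[simp]: "i < dim_col M \<Longrightarrow> j < dim_row M \<Longrightarrow> adj M $$ (i,j) = cnj (M $$ (j,i))"
  by (auto simp: adj_def)

lemma adj_adj[simp]: "adj (adj M) = M"
  by (rule eq_matI, auto)

lemma adj_mult:
  assumes "A \<in> carrier_mat n k" "B \<in> carrier_mat k l"
  shows "adj (A * B) = adj B * adj A"
proof (rule eq_matI)
  fix i j assume "i < dim_row (adj B * adj A)" and "j < dim_col (adj B * adj A)"
  then have i: "i < l" and j: "j < n" using assms by auto
  have "adj (A * B) $$ (i,j) = cnj (row A j \<bullet> col B i)" using assms i j by simp
  also have "\<dots> = (\<Sum>t = 0..<k. cnj (A $$ (j,t)) * cnj (B $$ (t,i)))"
    unfolding scalar_prod_def cnj_sum using assms i j by (intro sum.cong refl) auto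
  also have "\<dots> = row (adj B) i \<bullet> col (adj A) j"
    unfolding scalar_prod_def using assms i j by (intro sum.cong refl) (auto simp: mult.commute)
  also have "\<dots> = (adj B * adj A) $$ (i,j)" using assms i j by simp
  finally show "adj (A * B) $$ (i,j) = (adj B * adj A) $$ (i,j)" .
qed (use assms in auto)

lemma hermitian_adj: "hermitian_mat n A \<longleftrightarrow> A \<in> carrier_mat n n \<and> adj A = A"
proof
  assume h: "hermitian_mat n A"
  then have A: "A \<in> carrier_mat n n" by (simp add: hermitian_mat_def)
  have "adj A = A"
  proof (rule eq_matI)
    fix i j assume "i < dim_row A" "j < dim_col A"
    then show "adj A $$ (i,j) = A $$ (i,j)"
      using h A unfolding hermitian_mat_def by (metis adj_index carrier_matD complex_cnj_cnj)
  qed (use A in simp_all)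
  with A show "A \<in> carrier_mat n n \<and> adj A = A" by simp
next
  assume h: "A \<in> carrier_mat n n \<and> adj A = A"
  then show "hermitian_mat n A" unfolding hermitian_mat_def by (metis adj_index carrier_matD)
qed

lemma hermitian_carrier: "hermitian_mat n A \<Longrightarrow> A \<in> carrier_mat n n"
  by (simp add: hermitian_mat_def)

text \<open>Associativity and closure of products of square matrices, in a form the simplifier can use.\<close>
lemma mult_assoc_square:
  "A \<in> carrier_mat n n \<Longrightarrow> B \<in> carrier_mat n n \<Longrightarrow> C \<in> carrier_mat n n \<Longrightarrow> A * B * C = A * (B * C)"
  by (rule assoc_mult_mat)

lemma mult_carrier_square: "A \<in> carrier_mat n n \<Longrightarrow> B \<in> carrier_mat n n \<Longrightarrow> A * B \<in> carrier_mat n n"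
  by (rule mult_carrier_mat)

lemmas square_mat_simps = mult_assoc_square mult_carrier_square

definition unitary :: "nat \<Rightarrow> complex mat \<Rightarrow> bool" where
  "unitary n U \<longleftrightarrow> U \<in> carrier_mat n n \<and> adj U * U = 1\<^sub>m n"

text \<open>For square matrices a left inverse is a right inverse, so \<open>U * adj U = 1\<close> as well.\<close>
lemma unitary_right: "unitary n U \<Longrightarrow> U * adj U = 1\<^sub>m n"
  unfolding unitary_def using mat_mult_left_right_inverse[of "adj U" n U] by auto

lemma unitary_mult:
  assumes "unitary n W" "unitary n V"
  shows "unitary n (W * V)"
proof -
  have W: "W \<in> carrier_mat n n" "adj W * W = 1\<^sub>m n"
    and V: "V \<in> carrier_mat n n" "adj V * V = 1\<^sub>m n" using assms unfolding unitary_def by auto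
  have "adj (W * V) * (W * V) = adj V * (adj W * W) * V"
    using W(1) V(1) by (simp add: adj_mult[of W n n V n] square_mat_simps[where n=n])
  also have "\<dots> = 1\<^sub>m n" using W V by simp
  finally show ?thesis using W V unfolding unitary_def by simp
qed

lemma unitary_conj_cancel:
  assumes "unitary n W" "A \<in> carrier_mat n n"
  shows "W * (adj W * A * W) * adj W = A"
proof -
  have W: "W \<in> carrier_mat n n" "W * adj W = 1\<^sub>m n"
    using assms unitary_right unfolding unitary_def by auto
  have "W * (adj W * A * W) * adj W = (W * adj W) * A * (W * adj W)"
    using W(1) assms(2) by (simp add: square_mat_simps[where n=n])
  then show ?thesis using W assms(2) by simp
qed

lemma hermitian_unitary_conj:
  assumes "hermitian_mat n A" "unitary n W"
  shows "hermitian_mat n (adj W * A * W)"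
proof -
  have A: "A \<in> carrier_mat n n" "adj A = A" and W: "W \<in> carrier_mat n n"
    using assms unfolding hermitian_adj unitary_def by auto
  have "adj W * A \<in> carrier_mat n n" using A W by (simp add: mult_carrier_square)
  then have "adj (adj W * A * W) = adj W * (adj A * W)"
    using adj_mult[OF _ W] adj_mult[OF adj_carrier[OF W] A(1)] by (simp only: adj_adj)
  then show ?thesis unfolding hermitian_adj using A W by (simp add: square_mat_simps[where n=n])
qed

definition unit_normalize :: "complex vec \<Rightarrow> complex vec" where
  "unit_normalize w = complex_of_real (1 / sqrt (Re (w \<bullet>c w))) \<cdot>\<^sub>v w"

lemma cscalar_prod_smult:
  assumes "u \<in> carrier_vec n" "w \<in> carrier_vec n"
  shows "(c \<cdot>\<^sub>v u) \<bullet>c (d \<cdot>\<^sub>v w) = c * cnj d * (u \<bullet>c w)"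
  using assms by (simp add: conjugate_smult_vec)

lemma unit_normalize_length:
  assumes w: "w \<in> carrier_vec n" and w0: "w \<noteq> 0\<^sub>v n"
  shows "unit_normalize w \<bullet>c unit_normalize w = 1"
proof -
  have "w \<bullet>c w \<noteq> 0" using w w0 by simp
  moreover have "w \<bullet>c w \<ge> 0" by auto
  ultimately have im: "Im (w \<bullet>c w) = 0" and re: "Re (w \<bullet>c w) > 0"
    by (auto simp: less_eq_complex_def complex_eq_iff)
  define r where "r = Re (w \<bullet>c w)"
  have wr: "w \<bullet>c w = complex_of_real r" using im unfolding r_def by (simp add: complex_eq_iff)
  have "unit_normalize w = complex_of_real (1 / sqrt r) \<cdot>\<^sub>v w" unfolding unit_normalize_def r_def ..
  then have "unit_normalize w \<bullet>c unit_normalize w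
      = complex_of_real (1 / sqrt r) * cnj (complex_of_real (1 / sqrt r)) * complex_of_real r"
    by (simp only: cscalar_prod_smult[OF w w] wr)
  also have "\<dots> = complex_of_real (1 / sqrt r * (1 / sqrt r) * r)"
    by (simp only: complex_cnj_complex_of_real of_real_mult)
  also have "1 / sqrt r * (1 / sqrt r) * r = 1"
  proof -
    have "sqrt r * sqrt r = r" using re unfolding r_def[symmetric] by simp
    then show ?thesis using re unfolding r_def[symmetric] by (simp add: field_simps)
  qed
  finally show ?thesis by simp
qed

lemma unit_normalize_id: "w \<bullet>c w = 1 \<Longrightarrow> unit_normalize w = w"
  by (simp add: unit_normalize_def)

lemma adj_mult_self_index:
  assumes "W \<in> carrier_mat n k" "i < k" "j < k"
  shows "(adj W * W) $$ (i,j) = col W j \<bullet>c col W i"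
  using assms by (simp add: scalar_prod_def mult.commute)

lemma unitary_of_corthogonal:
  assumes ws: "set ws \<subseteq> carrier_vec n" "corthogonal ws" "length ws = n"
  shows "unitary n (mat_of_cols n (map unit_normalize ws))"
proof -
  define W where "W = mat_of_cols n (map unit_normalize ws)"
  have wsc: "ws ! i \<in> carrier_vec n" if "i < n" for i using ws that by auto
  have Wc: "W \<in> carrier_mat n n"
    unfolding W_def using mat_of_cols_carrier(1)[of n "map unit_normalize ws"] ws(3) by simp
  have colW: "col W i = unit_normalize (ws ! i)" if "i < n" for i
  proof -
    have "unit_normalize (ws ! i) \<in> carrier_vec n" using wsc[OF that] by (simp add: unit_normalize_def)
    then show ?thesis unfolding W_def using ws(3) that by (simp add: col_mat_of_cols)
  qed
  have "adj W * W = 1\<^sub>m n"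
  proof (rule eq_matI)
    fix i j assume "i < dim_row (1\<^sub>m n)" and "j < dim_col (1\<^sub>m n)"
    then have i: "i < n" and j: "j < n" by auto
    have "(adj W * W) $$ (i,j) = unit_normalize (ws ! j) \<bullet>c unit_normalize (ws ! i)"
      using adj_mult_self_index[OF Wc i j] colW[OF i] colW[OF j] by simp
    also have "\<dots> = 1\<^sub>m n $$ (i,j)"
    proof (cases "i = j")
      case True
      have "ws ! i \<noteq> 0\<^sub>v n" using corthogonalD[OF ws(2), of i i] i ws(3) wsc[OF i] by auto
      then show ?thesis using True unit_normalize_length[OF wsc[OF i]] i by simp
    next
      case False
      then show ?thesis using corthogonalD[OF ws(2), of j i] i j ws(3)
        unfolding unit_normalize_def cscalar_prod_smult[OF wsc[OF j] wsc[OF i]] by simp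
    qed
    finally show "(adj W * W) $$ (i,j) = 1\<^sub>m n $$ (i,j)" .
  qed (use Wc in simp_all)
  then show ?thesis using Wc unfolding unitary_def W_def by simp
qed

text \<open>Every unit vector is the first column of some unitary matrix: apply Gram--Schmidt to a basis
  completion of the vector and normalise.\<close>
lemma unitary_completion:
  assumes v: "v \<in> carrier_vec n" and v1: "v \<bullet>c v = 1"
  shows "\<exists>W. unitary n W \<and> col W 0 = v"
proof -
  have v0: "v \<noteq> 0\<^sub>v n" using conjugate_square_eq_0_vec[OF v] v1 by (metis zero_neq_one)
  interpret cof_vec_space n "TYPE(complex)" .
  define b where "b = basis_completion v"
  note bc = basis_completion[OF v v0, folded b_def]
  have n0: "n > 0" using v v0 by (cases n) auto
  obtain vs where bv: "b = v # vs" using bc(6) bc(7) n0 by (cases b) auto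
  define ws where "ws = gram_schmidt n b"
  from gram_schmidt_result[OF bc(2) bc(4) bc(5) refl, folded ws_def]
  have ws: "set ws \<subseteq> carrier_vec n" "corthogonal ws" "length ws = n" by (auto simp: bc)
  have "ws ! 0 = v" using gram_schmidt_hd[OF v, of vs] ws(3) n0 unfolding ws_def bv by (cases "gram_schmidt n (v # vs)") auto
  moreover have "unit_normalize v \<in> carrier_vec n" using v by (simp add: unit_normalize_def)
  ultimately have "col (mat_of_cols n (map unit_normalize ws)) 0 = v"
    using ws(3) n0 v1 by (simp add: col_mat_of_cols unit_normalize_id)
  then show ?thesis using unitary_of_corthogonal[OF ws] by blast
qed

lemma unit_eigenvector:
  fixes A :: "complex mat"
  assumes A: "A \<in> carrier_mat n n" and e: "eigenvalue A e"
  shows "\<exists>v. v \<in> carrier_vec n \<and> v \<bullet>c v = 1 \<and> A *\<^sub>v v = e \<cdot>\<^sub>v v"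
proof -
  from find_eigenvector[OF A e] obtain v0 where "eigenvector A v0 e" by blast
  then have v0: "v0 \<in> carrier_vec n" "v0 \<noteq> 0\<^sub>v n" and Av0: "A *\<^sub>v v0 = e \<cdot>\<^sub>v v0"
    unfolding eigenvector_def using A by auto
  have "A *\<^sub>v unit_normalize v0 = e \<cdot>\<^sub>v unit_normalize v0"
    using A v0 Av0 unfolding unit_normalize_def by (simp add: mult_mat_vec smult_smult_assoc mult.commute)
  then show ?thesis using unit_normalize_length[OF v0] v0 by (intro exI[of _ "unit_normalize v0"]) (simp add: unit_normalize_def)
qed

section \<open>The spectral theorem for Hermitian matrices\<close>

definition ext1 :: "complex \<Rightarrow> complex mat \<Rightarrow> complex mat" where
  "ext1 c M = mat (Suc (dim_row M)) (Suc (dim_col M)) (\<lambda>(i,j). if i = 0 then (if j = 0 then c else 0)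
     else if j = 0 then 0 else M $$ (i - 1, j - 1))"

lemma ext1_carrier[simp]: "M \<in> carrier_mat k l \<Longrightarrow> ext1 c M \<in> carrier_mat (Suc k) (Suc l)"
  by (auto simp: ext1_def)

lemma ext1_index: "i < Suc (dim_row M) \<Longrightarrow> j < Suc (dim_col M) \<Longrightarrow> ext1 c M $$ (i,j) =
  (if i = 0 then (if j = 0 then c else 0) else if j = 0 then 0 else M $$ (i - 1, j - 1))"
  by (auto simp: ext1_def)

lemma ext1_mult:
  assumes M: "M \<in> carrier_mat k l" and N: "N \<in> carrier_mat l p"
  shows "ext1 c M * ext1 d N = ext1 (c * d) (M * N)"
proof (rule eq_matI)
  fix i j assume "i < dim_row (ext1 (c * d) (M * N))" and "j < dim_col (ext1 (c * d) (M * N))"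
  then have i: "i < Suc k" and j: "j < Suc p" using M N by (auto simp: ext1_def)
  have "(ext1 c M * ext1 d N) $$ (i,j) = (\<Sum>t = 0..<Suc l. ext1 c M $$ (i,t) * ext1 d N $$ (t,j))"
    using M N i j by (simp add: scalar_prod_def ext1_def)
  also have "\<dots> = ext1 c M $$ (i,0) * ext1 d N $$ (0,j)
      + (\<Sum>t = 0..<l. ext1 c M $$ (i,Suc t) * ext1 d N $$ (Suc t,j))"
    by (subst sum.atLeast0_lessThan_Suc_shift) simp
  also have "\<dots> = ext1 (c * d) (M * N) $$ (i,j)"
  proof (cases "i = 0 \<or> j = 0")
    case True
    then show ?thesis using M N i j by (auto simp: ext1_index)
  next
    case False
    have "(\<Sum>t = 0..<l. ext1 c M $$ (i,Suc t) * ext1 d N $$ (Suc t,j))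
        = (\<Sum>t = 0..<l. M $$ (i - 1, t) * N $$ (t, j - 1))"
      using M N i j False by (intro sum.cong refl) (simp add: ext1_index)
    also have "\<dots> = (M * N) $$ (i - 1, j - 1)"
      using M N i j False by (auto simp: scalar_prod_def)
    finally show ?thesis using M N i j False by (simp add: ext1_index)
  qed
  finally show "(ext1 c M * ext1 d N) $$ (i,j) = ext1 (c * d) (M * N) $$ (i,j)" .
qed (use M N in \<open>auto simp: ext1_def\<close>)

lemma ext1_adj: "adj (ext1 c M) = ext1 (cnj c) (adj M)"
  by (rule eq_matI) (auto simp: ext1_index ext1_def)

lemma ext1_diag: "diagonal_mat M \<Longrightarrow> diagonal_mat (ext1 c M)"
  unfolding diagonal_mat_def by (auto simp: ext1_index ext1_def)

lemma unitary_ext1: "unitary n V \<Longrightarrow> unitary (Suc n) (ext1 1 V)"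
proof -
  assume "unitary n V"
  then have V: "V \<in> carrier_mat n n" "adj V * V = 1\<^sub>m n" unfolding unitary_def by auto
  have "adj (ext1 1 V) * ext1 1 V = ext1 1 (1\<^sub>m n)"
    using V by (simp add: ext1_adj ext1_mult[of _ n n _ n])
  also have "\<dots> = 1\<^sub>m (Suc n)" by (rule eq_matI) (auto simp: ext1_index ext1_def)
  finally show ?thesis using V unfolding unitary_def by simp
qed

lemma ext1_conj:
  assumes "V \<in> carrier_mat n n" "D \<in> carrier_mat n n"
  shows "ext1 e (V * D * adj V) = ext1 1 V * ext1 e D * adj (ext1 1 V)"
  using assms by (simp add: ext1_adj ext1_mult[of _ n n _ n])

lemma deflation:
  assumes hA: "hermitian_mat (Suc n) A" and uW: "unitary (Suc n) W"
    and W0: "col W 0 = v" and Av: "A *\<^sub>v v = e \<cdot>\<^sub>v v"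
  defines "A' \<equiv> adj W * A * W"
  shows "A' = ext1 e (mat n n (\<lambda>(i,j). A' $$ (Suc i, Suc j)))"
proof -
  have A: "A \<in> carrier_mat (Suc n) (Suc n)" using hA by (rule hermitian_carrier)
  have W: "W \<in> carrier_mat (Suc n) (Suc n)" and WW: "adj W * W = 1\<^sub>m (Suc n)"
    using uW unfolding unitary_def by auto
  have v: "v \<in> carrier_vec (Suc n)" using W0 W by (metis carrier_matD(1) col_dim)
  have hA': "hermitian_mat (Suc n) A'" unfolding A'_def using hA uW by (rule hermitian_unitary_conj)
  have col0: "A' $$ (i,0) = (if i = 0 then e else 0)" if i: "i < Suc n" for i
  proof -
    have "A' $$ (i,0) = row (adj W) i \<bullet> col (A * W) 0"
      unfolding A'_def using A W i by (simp add: assoc_mult_mat[of _ "Suc n" "Suc n" _ "Suc n" _ "Suc n"])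
    also have "col (A * W) 0 = A *\<^sub>v col W 0" by (rule col_mult2[OF A W zero_less_Suc])
    also have "\<dots> = e \<cdot>\<^sub>v v" using W0 Av by (simp only:)
    also have "row (adj W) i \<bullet> (e \<cdot>\<^sub>v v) = e * (adj W * W) $$ (i,0)"
      using W v i W0 by simp
    finally show ?thesis using WW i by simp
  qed
  have sym: "A' $$ (0,j) = cnj (A' $$ (j,0))" if "j < Suc n" for j
    using hA' that unfolding hermitian_mat_def by blast
  have "cnj e = e" using sym[of 0] col0[of 0] by simp
  then have row0: "A' $$ (0,j) = (if j = 0 then e else 0)" if "j < Suc n" for j
    using sym[OF that] col0[OF that] by simp
  have A': "A' \<in> carrier_mat (Suc n) (Suc n)" using hA' by (rule hermitian_carrier)
  show ?thesis
  proof (rule eq_matI)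
    fix i j assume "i < dim_row (ext1 e (mat n n (\<lambda>(i,j). A' $$ (Suc i, Suc j))))"
      and "j < dim_col (ext1 e (mat n n (\<lambda>(i,j). A' $$ (Suc i, Suc j))))"
    then have i: "i < Suc n" and j: "j < Suc n" by (auto simp: ext1_def)
    show "A' $$ (i,j) = ext1 e (mat n n (\<lambda>(i,j). A' $$ (Suc i, Suc j))) $$ (i,j)"
      using row0[OF j] col0[OF i] i j by (cases i; cases j) (auto simp: ext1_index)
  qed (use A' in \<open>auto simp: ext1_def\<close>)
qed

lemma hermitian_lower_block:
  assumes "hermitian_mat (Suc n) M"
  shows "hermitian_mat n (mat n n (\<lambda>(i,j). M $$ (Suc i, Suc j)))"
  unfolding hermitian_mat_def
proof (intro conjI allI impI)
  fix i j assume i: "i < n" and j: "j < n"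
  then have "M $$ (Suc i, Suc j) = cnj (M $$ (Suc j, Suc i))"
    using assms unfolding hermitian_mat_def by (meson Suc_mono)
  then show "mat n n (\<lambda>(i,j). M $$ (Suc i, Suc j)) $$ (i, j)
      = cnj (mat n n (\<lambda>(i,j). M $$ (Suc i, Suc j)) $$ (j, i))" using i j by simp
qed simp

text \<open>By induction on the
  dimension: split off a unit eigenvector (which exists by the fundamental theorem of algebra) and
  diagonalise the Hermitian lower block.\<close>
theorem spectral:
  "hermitian_mat n A \<Longrightarrow> \<exists>U D. unitary n U \<and> D \<in> carrier_mat n n \<and> diagonal_mat D \<and> A = U * D * adj U"
proof (induction n arbitrary: A)
  case 0
  then have A: "A \<in> carrier_mat 0 0" by (rule hermitian_carrier)
  have "unitary 0 (1\<^sub>m 0)" unfolding unitary_def by (auto intro!: eq_matI)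
  moreover have "A = 1\<^sub>m 0 * A * adj (1\<^sub>m 0)" using A by (intro eq_matI) auto
  moreover have "diagonal_mat A" using A unfolding diagonal_mat_def by auto
  ultimately show ?case using A by blast
next
  case (Suc n)
  have A: "A \<in> carrier_mat (Suc n) (Suc n)" using Suc.prems by (rule hermitian_carrier)
  obtain e where "eigenvalue A e" using spectrum_non_empty[OF A] unfolding spectrum_def by auto
  then obtain v where v: "v \<in> carrier_vec (Suc n)" "v \<bullet>c v = 1" and Av: "A *\<^sub>v v = e \<cdot>\<^sub>v v"
    using unit_eigenvector[OF A] by blast
  obtain W where uW: "unitary (Suc n) W" and W0: "col W 0 = v"
    using unitary_completion[OF v] by blast
  define A3 where "A3 = mat n n (\<lambda>(i,j). (adj W * A * W) $$ (Suc i, Suc j))"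
  have block: "adj W * A * W = ext1 e A3"
    unfolding A3_def using deflation[OF Suc.prems uW W0 Av] .
  have "hermitian_mat n A3"
    unfolding A3_def by (rule hermitian_lower_block, rule hermitian_unitary_conj[OF Suc.prems uW])
  then obtain V D3 where uV: "unitary n V" and D3: "D3 \<in> carrier_mat n n"
    and dD3: "diagonal_mat D3" and A3V: "A3 = V * D3 * adj V" using Suc.IH by blast
  have W: "W \<in> carrier_mat (Suc n) (Suc n)" and V: "V \<in> carrier_mat n n"
    using uW uV unfolding unitary_def by auto
  define V1 where "V1 = ext1 1 V"
  have V1: "V1 \<in> carrier_mat (Suc n) (Suc n)" unfolding V1_def using V by simp
  have "adj W * A * W = V1 * ext1 e D3 * adj V1"
    unfolding block A3V V1_def by (rule ext1_conj[OF V D3])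
  then have "A = W * (V1 * ext1 e D3 * adj V1) * adj W"
    using unitary_conj_cancel[OF uW A] by simp
  also have "\<dots> = (W * V1) * ext1 e D3 * adj (W * V1)"
    using W V1 ext1_carrier[OF D3, of e]
    by (simp add: adj_mult[OF W V1] square_mat_simps[where n="Suc n"])
  finally have "A = (W * V1) * ext1 e D3 * adj (W * V1)" .
  moreover have "unitary (Suc n) (W * V1)"
    unfolding V1_def using uW unitary_ext1[OF uV] by (rule unitary_mult)
  ultimately show ?case using D3 ext1_diag[OF dD3] by (intro exI[of _ "W * V1"] exI[of _ "ext1 e D3"]) simp
qed

lemma eigenvalue_listed:
  assumes A: "A \<in> carrier_mat n n" and ev: "eigenvalues_are n A a" and z: "eigenvalue A z"
  shows "\<exists>i<n. z = complex_of_real (a i)"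
proof -
  have "poly (char_poly A) z = 0" using z eigenvalue_root_char_poly[OF A] by simp
  then have "(\<Prod>i<n. poly [:- complex_of_real (a i), 1:] z) = 0"
    using ev unfolding eigenvalues_are_def by (simp add: poly_prod)
  then show ?thesis by (auto simp: prod_zero_iff)
qed

lemma listed_eigenvalue:
  assumes A: "A \<in> carrier_mat n n" and ev: "eigenvalues_are n A a" and i: "i < n"
  shows "eigenvalue A (complex_of_real (a i))"
proof -
  have "(\<Prod>k<n. poly [:- complex_of_real (a k), 1:] (complex_of_real (a i))) = 0"
    using i by (intro prod_zero) auto
  then have "poly (char_poly A) (complex_of_real (a i)) = 0"
    using ev unfolding eigenvalues_are_def by (simp add: poly_prod)
  then show ?thesis using eigenvalue_root_char_poly[OF A] by simp
qed

text \<open>The diagonal entries of a unitary diagonalisation are eigenvalues (the columns of \<open>U\<close> are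
  the eigenvectors).\<close>
lemma diagonalisation_eigenvalue:
  assumes A: "A \<in> carrier_mat n n" and uU: "unitary n U" and D: "D \<in> carrier_mat n n"
    and dD: "diagonal_mat D" and AU: "A = U * D * adj U" and l: "l < n"
  shows "eigenvalue A (D $$ (l,l))"
proof -
  have U: "U \<in> carrier_mat n n" and UU: "adj U * U = 1\<^sub>m n" using uU unfolding unitary_def by auto
  have "A * U = U * D * (adj U * U)"
    unfolding AU using U D by (simp add: square_mat_simps[where n=n])
  also have "\<dots> = U * D" using UU U D by simp
  finally have AUe: "A * U = U * D" .
  have "A *\<^sub>v col U l = col (U * D) l" using AUe A U l by (metis col_mult2)
  also have "\<dots> = D $$ (l,l) \<cdot>\<^sub>v col U l"
  proof (rule eq_vecI)
    fix r assume "r < dim_vec (D $$ (l,l) \<cdot>\<^sub>v col U l)"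
    then have r: "r < n" using U by simp
    have "col (U * D) l $ r = (\<Sum>t = 0..<n. U $$ (r,t) * D $$ (t,l))"
      using U D r l by (simp add: scalar_prod_def)
    also have "\<dots> = (\<Sum>t = 0..<n. if t = l then U $$ (r,l) * D $$ (l,l) else 0)"
      using dD D l unfolding diagonal_mat_def by (intro sum.cong refl) auto
    also have "\<dots> = (D $$ (l,l) \<cdot>\<^sub>v col U l) $ r" using l r U by simp
    finally show "col (U * D) l $ r = (D $$ (l,l) \<cdot>\<^sub>v col U l) $ r" .
  qed (use U D in simp)
  finally have ev: "A *\<^sub>v col U l = D $$ (l,l) \<cdot>\<^sub>v col U l" .
  have "col U l \<noteq> 0\<^sub>v n"
  proof
    assume "col U l = 0\<^sub>v n"
    then have "(adj U * U) $$ (l,l) = 0" using U l by simp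
    then show False using UU l by simp
  qed
  then show ?thesis unfolding eigenvalue_def eigenvector_def
    using ev A U l by (intro exI[of _ "col U l"]) simp
qed

lemma spectral_listed:
  assumes hA: "hermitian_mat n A" and ev: "eigenvalues_are n A a"
  obtains U D where "unitary n U" "D \<in> carrier_mat n n" "diagonal_mat D" "A = U * D * adj U"
    "\<And>l. l < n \<Longrightarrow> \<exists>i<n. D $$ (l,l) = complex_of_real (a i)"
proof -
  obtain U D where uU: "unitary n U" and D: "D \<in> carrier_mat n n" and dD: "diagonal_mat D"
    and AU: "A = U * D * adj U" using spectral[OF hA] by blast
  have A: "A \<in> carrier_mat n n" using hA by (rule hermitian_carrier)
  show ?thesis
    using that[OF uU D dD AU] eigenvalue_listed[OF A ev diagonalisation_eigenvalue[OF A uU D dD AU]]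
    by blast
qed

section \<open>Quadratic forms and positive semidefiniteness\<close>

definition qf :: "nat \<Rightarrow> complex mat \<Rightarrow> complex vec \<Rightarrow> complex" where
  "qf d X v = (\<Sum>i<d. \<Sum>j<d. cnj (v $ i) * X $$ (i, j) * v $ j)"

text \<open>In the ordered field of complex numbers, \<open>z \<ge> 0\<close> means that \<open>z\<close> is a nonnegative real.\<close>
lemma psd_iff: "psd_mat d X \<longleftrightarrow> X \<in> carrier_mat d d \<and> (\<forall>v \<in> carrier_vec d. qf d X v \<ge> 0)"
  unfolding psd_mat_def qf_def Let_def by (auto simp: less_eq_complex_def)

lemma qf_inner: assumes "X \<in> carrier_mat d d" "v \<in> carrier_vec d"
  shows "qf d X v = conjugate v \<bullet> (X *\<^sub>v v)"
proof -
  have "conjugate v \<bullet> (X *\<^sub>v v) = (\<Sum>i<d. cnj (v $ i) * (\<Sum>t<d. X $$ (i,t) * v $ t))"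
    using assms by (simp add: scalar_prod_def atLeast0LessThan)
  also have "\<dots> = qf d X v" unfolding qf_def by (simp add: sum_distrib_left mult.assoc)
  finally show ?thesis by simp
qed

lemma qf_add: assumes "X \<in> carrier_mat d d" "Y \<in> carrier_mat d d"
  shows "qf d (X + Y) v = qf d X v + qf d Y v"
proof -
  have "qf d (X + Y) v = (\<Sum>i<d. \<Sum>j<d. cnj (v $ i) * X $$ (i, j) * v $ j + cnj (v $ i) * Y $$ (i, j) * v $ j)"
    unfolding qf_def using assms by (intro sum.cong refl) (simp add: distrib_left distrib_right)
  also have "\<dots> = qf d X v + qf d Y v" unfolding qf_def by (simp add: sum.distrib)
  finally show ?thesis .
qed

lemma qf_smult: assumes "X \<in> carrier_mat d d" shows "qf d (c \<cdot>\<^sub>m X) v = c * qf d X v"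
proof -
  have "qf d (c \<cdot>\<^sub>m X) v = (\<Sum>i<d. \<Sum>j<d. c * (cnj (v $ i) * X $$ (i, j) * v $ j))"
    unfolding qf_def using assms by (intro sum.cong refl) (simp add: mult_ac)
  also have "\<dots> = c * qf d X v" unfolding qf_def by (simp add: sum_distrib_left)
  finally show ?thesis .
qed

lemma inner_adj:
  assumes U: "U \<in> carrier_mat n k" and v: "v \<in> carrier_vec n" and y: "y \<in> carrier_vec k"
  shows "conjugate v \<bullet> (U *\<^sub>v y) = conjugate (adj U *\<^sub>v v) \<bullet> y"
proof -
  have "conjugate v \<bullet> (U *\<^sub>v y) = (\<Sum>i<n. \<Sum>t<k. cnj (v $ i) * U $$ (i,t) * y $ t)"
    using assms by (simp add: scalar_prod_def atLeast0LessThan sum_distrib_left mult_ac)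
  also have "\<dots> = (\<Sum>t<k. \<Sum>i<n. cnj (v $ i) * U $$ (i,t) * y $ t)"
    by (rule sum.swap)
  also have "\<dots> = (\<Sum>t<k. cnj (\<Sum>i<n. cnj (U $$ (i,t)) * v $ i) * y $ t)"
    by (simp add: sum_distrib_left sum_distrib_right cnj_sum mult_ac)
  also have "\<dots> = conjugate (adj U *\<^sub>v v) \<bullet> y"
    using assms by (simp add: scalar_prod_def atLeast0LessThan mult_ac)
  finally show ?thesis .
qed

lemma qf_unitary_conj:
  assumes U: "U \<in> carrier_mat n n" and D: "D \<in> carrier_mat n n" and v: "v \<in> carrier_vec n"
  shows "qf n (U * D * adj U) v = qf n D (adj U *\<^sub>v v)"
proof -
  have w: "adj U *\<^sub>v v \<in> carrier_vec n" using mult_mat_vec_carrier[OF adj_carrier[OF U] v] .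
  have "(U * D * adj U) *\<^sub>v v = U *\<^sub>v (D *\<^sub>v (adj U *\<^sub>v v))"
    using assoc_mult_mat_vec[OF mult_carrier_mat[OF U D] adj_carrier[OF U] v]
      assoc_mult_mat_vec[OF U D w] by simp
  then have "qf n (U * D * adj U) v = conjugate v \<bullet> (U *\<^sub>v (D *\<^sub>v (adj U *\<^sub>v v)))"
    using qf_inner[of "U * D * adj U" n v] U D v by (simp add: square_mat_simps[where n=n])
  also have "\<dots> = conjugate (adj U *\<^sub>v v) \<bullet> (D *\<^sub>v (adj U *\<^sub>v v))"
    using inner_adj[OF U v] D w by simp
  also have "\<dots> = qf n D (adj U *\<^sub>v v)" using qf_inner[OF D w] by simp
  finally show ?thesis .
qed

lemma psd_diagonal:
  assumes D: "D \<in> carrier_mat n n" and dD: "diagonal_mat D" and pos: "\<And>l. l < n \<Longrightarrow> D $$ (l,l) \<ge> 0"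
  shows "psd_mat n D"
  unfolding psd_iff
proof (intro conjI ballI D)
  fix w :: "complex vec" assume "w \<in> carrier_vec n"
  have "qf n D w = (\<Sum>i<n. \<Sum>j<n. if j = i then cnj (w $ i) * D $$ (i, i) * w $ i else 0)"
    unfolding qf_def using dD D unfolding diagonal_mat_def by (intro sum.cong refl) auto
  also have "\<dots> = (\<Sum>l<n. D $$ (l,l) * (cnj (w $ l) * w $ l))" by (simp add: mult_ac)
  also have "\<dots> \<ge> 0"
  proof (rule sum_nonneg)
    fix l assume "l \<in> {..<n}"
    moreover have "cnj (w $ l) * w $ l \<ge> 0" by (simp add: less_eq_complex_def)
    ultimately show "D $$ (l,l) * (cnj (w $ l) * w $ l) \<ge> 0" using pos by (simp add: mult_nonneg_nonneg)
  qed
  finally show "qf n D w \<ge> 0" .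
qed

lemma psd_conj:
  assumes U: "U \<in> carrier_mat n n" and psd: "psd_mat n D"
  shows "psd_mat n (U * D * adj U)"
proof -
  have D: "D \<in> carrier_mat n n" using psd unfolding psd_iff by simp
  show ?thesis unfolding psd_iff
  proof (intro conjI ballI)
    show "U * D * adj U \<in> carrier_mat n n" using U D by (simp add: square_mat_simps[where n=n])
    fix v :: "complex vec" assume v: "v \<in> carrier_vec n"
    have "adj U *\<^sub>v v \<in> carrier_vec n" using mult_mat_vec_carrier[OF adj_carrier[OF U] v] .
    then show "qf n (U * D * adj U) v \<ge> 0"
      using qf_unitary_conj[OF U D v] psd unfolding psd_iff by simp
  qed
qed

text \<open>If \<open>s a\<^sub>i + t \<ge> 0\<close> for every eigenvalue of the Hermitian matrix \<open>A\<close>, then \<open>sA + tI\<close> is positive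
  semidefinite: it is unitarily similar to the diagonal matrix of the numbers \<open>s a\<^sub>i + t\<close>.\<close>
lemma psd_shift:
  assumes hA: "hermitian_mat n A" and ev: "eigenvalues_are n A a"
    and st: "\<And>i. i < n \<Longrightarrow> s * a i + t \<ge> 0"
  shows "psd_mat n (complex_of_real s \<cdot>\<^sub>m A + complex_of_real t \<cdot>\<^sub>m 1\<^sub>m n)"
proof -
  obtain U D where uU: "unitary n U" and D: "D \<in> carrier_mat n n" and dD: "diagonal_mat D"
    and AU: "A = U * D * adj U" and Dl: "\<And>l. l < n \<Longrightarrow> \<exists>i<n. D $$ (l,l) = complex_of_real (a i)"
    using spectral_listed[OF hA ev] by blast
  have U: "U \<in> carrier_mat n n" and UU: "U * adj U = 1\<^sub>m n"
    using uU unitary_right unfolding unitary_def by auto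
  define E where "E = complex_of_real s \<cdot>\<^sub>m D + complex_of_real t \<cdot>\<^sub>m 1\<^sub>m n"
  have E: "E \<in> carrier_mat n n" unfolding E_def using D by simp
  have "psd_mat n E" unfolding E_def
  proof (rule psd_diagonal)
    show "diagonal_mat (complex_of_real s \<cdot>\<^sub>m D + complex_of_real t \<cdot>\<^sub>m 1\<^sub>m n)"
      using dD D unfolding diagonal_mat_def by auto
    fix l assume l: "l < n"
    then obtain i where "i < n" "D $$ (l,l) = complex_of_real (a i)" using Dl by blast
    then show "(complex_of_real s \<cdot>\<^sub>m D + complex_of_real t \<cdot>\<^sub>m 1\<^sub>m n) $$ (l,l) \<ge> 0"
      using st l D by (auto simp: less_eq_complex_def)
  qed (use D in simp)
  moreover have "U * E * adj U = complex_of_real s \<cdot>\<^sub>m A + complex_of_real t \<cdot>\<^sub>m 1\<^sub>m n"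
  proof -
    have "E * adj U = complex_of_real s \<cdot>\<^sub>m (D * adj U) + complex_of_real t \<cdot>\<^sub>m adj U"
      unfolding E_def using U D
      by (simp add: add_mult_distrib_mat[of _ n n _ _ n] mult_smult_assoc_mat[of _ n n _ n])
    then have "U * E * adj U = complex_of_real s \<cdot>\<^sub>m (U * D * adj U) + complex_of_real t \<cdot>\<^sub>m (U * adj U)"
      using U D E by (simp add: mult_add_distrib_mat[of U n n _ n] mult_smult_distrib[of U n n _ n]
          square_mat_simps[where n=n])
    then show ?thesis unfolding AU UU .
  qed
  ultimately show ?thesis using psd_conj[OF U] by metis
qed

text \<open>Conversely, if \<open>sB + tI\<close> is positive semidefinite then \<open>s b\<^sub>j + t \<ge> 0\<close> for every eigenvalue
  \<open>b\<^sub>j\<close> of \<open>B\<close> (evaluate the quadratic form at an eigenvector).\<close>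
lemma psd_shift_eigenvalue:
  assumes B: "B \<in> carrier_mat m m" and ev: "eigenvalues_are m B b" and j: "j < m"
    and psd: "psd_mat m (complex_of_real s \<cdot>\<^sub>m B + complex_of_real t \<cdot>\<^sub>m 1\<^sub>m m)"
  shows "s * b j + t \<ge> 0"
proof -
  obtain x where x: "x \<in> carrier_vec m" "x \<bullet>c x = 1" and Bx: "B *\<^sub>v x = complex_of_real (b j) \<cdot>\<^sub>v x"
    using unit_eigenvector[OF B listed_eigenvalue[OF B ev j]] by blast
  have x1: "conjugate x \<bullet> x = 1" using x comm_scalar_prod[of x m "conjugate x"] by simp
  have "qf m (complex_of_real s \<cdot>\<^sub>m B + complex_of_real t \<cdot>\<^sub>m 1\<^sub>m m) x = complex_of_real (s * b j + t)"
    using B x x1 Bx by (simp add: qf_add qf_smult qf_inner[of _ m x] algebra_simps)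
  moreover have "qf m (complex_of_real s \<cdot>\<^sub>m B + complex_of_real t \<cdot>\<^sub>m 1\<^sub>m m) x \<ge> 0"
    using psd x unfolding psd_iff by blast
  ultimately show ?thesis by (simp add: less_eq_complex_def)
qed

section \<open>Necessary conditions: completely positive maps and spectral bounds\<close>

text \<open>A completely positive map is in particular positive (take the ampliation with \<open>k = 1\<close>).\<close>
lemma cp_positive:
  assumes cp: "completely_positive n m \<Phi>" and X: "psd_mat n X"
  shows "psd_mat m (\<Phi> X)"
proof -
  have Xc: "X \<in> carrier_mat n n" using X unfolding psd_mat_def by auto
  have PX: "\<Phi> X \<in> carrier_mat m m"
    using cp Xc unfolding completely_positive_def linear_map_mat_def by auto
  have "ampliation 1 n m \<Phi> X = \<Phi> X"
  proof (rule eq_matI)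
    fix i j assume "i < dim_row (\<Phi> X)" "j < dim_col (\<Phi> X)"
    then have ij: "i < m" "j < m" using PX by auto
    moreover have "mat n n (\<lambda>(r, s). X $$ ((i div m) * n + r, (j div m) * n + s)) = X"
      using Xc ij by (intro eq_matI) auto
    ultimately show "ampliation 1 n m \<Phi> X $$ (i,j) = \<Phi> X $$ (i,j)" by (simp add: ampliation_def)
  qed (use PX in \<open>auto simp: ampliation_def\<close>)
  moreover have "psd_mat (1 * m) (ampliation 1 n m \<Phi> X)"
    using cp X unfolding completely_positive_def by (metis mult_1)
  ultimately show ?thesis by simp
qed

lemma linear_map_shift:
  assumes lin: "linear_map_mat n m \<Phi>" and A: "A \<in> carrier_mat n n"
  shows "\<Phi> (s \<cdot>\<^sub>m A + t \<cdot>\<^sub>m 1\<^sub>m n) = s \<cdot>\<^sub>m \<Phi> A + t \<cdot>\<^sub>m \<Phi> (1\<^sub>m n)"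
  using lin A unfolding linear_map_mat_def by (metis one_carrier_mat smult_carrier_mat)

text \<open>The key necessary condition: a (unital, if \<open>t \<noteq> 0\<close>) completely positive map sending \<open>A\<close> to \<open>B\<close>
  preserves every affine bound \<open>s x + t \<ge> 0\<close> valid on the spectrum of \<open>A\<close>, because it maps the
  positive semidefinite matrix \<open>sA + tI\<close> to the positive semidefinite matrix \<open>sB + tI\<close>.\<close>
lemma cp_preserves_spectral_bound:
  assumes cp: "completely_positive n m \<Phi>" and PhiA: "\<Phi> A = B"
    and hA: "hermitian_mat n A" and hB: "hermitian_mat m B"
    and evA: "eigenvalues_are n A a" and evB: "eigenvalues_are m B b"
    and st: "\<And>i. i < n \<Longrightarrow> s * a i + t \<ge> 0" and unit: "t = 0 \<or> \<Phi> (1\<^sub>m n) = 1\<^sub>m m"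
    and j: "j < m"
  shows "s * b j + t \<ge> 0"
proof -
  have A: "A \<in> carrier_mat n n" using hA by (rule hermitian_carrier)
  have lin: "linear_map_mat n m \<Phi>" using cp unfolding completely_positive_def by auto
  have "\<Phi> (1\<^sub>m n) \<in> carrier_mat m m" using lin unfolding linear_map_mat_def by auto
  then have "complex_of_real t \<cdot>\<^sub>m \<Phi> (1\<^sub>m n) = complex_of_real t \<cdot>\<^sub>m 1\<^sub>m m"
    using unit by (cases "t = 0") (auto intro!: eq_matI)
  then have "\<Phi> (complex_of_real s \<cdot>\<^sub>m A + complex_of_real t \<cdot>\<^sub>m 1\<^sub>m n)
      = complex_of_real s \<cdot>\<^sub>m B + complex_of_real t \<cdot>\<^sub>m 1\<^sub>m m"
    using linear_map_shift[OF lin A] PhiA by simp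
  moreover have "psd_mat m (\<Phi> (complex_of_real s \<cdot>\<^sub>m A + complex_of_real t \<cdot>\<^sub>m 1\<^sub>m n))"
    using cp_positive[OF cp psd_shift[OF hA evA st]] .
  ultimately show ?thesis using psd_shift_eigenvalue[OF hermitian_carrier[OF hB] evB j] by simp
qed

section \<open>Measure-and-prepare maps are completely positive\<close>

text \<open>The map \<open>X \<mapsto> \<Sum>\<^sub>t c\<^sub>t \<langle>x\<^sub>t, X x\<^sub>t\<rangle> g\<^sub>t g\<^sub>t\<^sup>*\<close> with nonnegative weights \<open>c\<^sub>t\<close>: it measures \<open>X\<close> in the
  states \<open>x\<^sub>t\<close> and prepares the rank-one matrices \<open>g\<^sub>t g\<^sub>t\<^sup>*\<close>.  (The vectors \<open>g\<^sub>t\<close> are given by their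
  coordinate functions.)\<close>
definition measure_prepare :: "nat \<Rightarrow> nat \<Rightarrow> 'a set \<Rightarrow> ('a \<Rightarrow> real) \<Rightarrow> ('a \<Rightarrow> complex vec)
    \<Rightarrow> ('a \<Rightarrow> nat \<Rightarrow> complex) \<Rightarrow> complex mat \<Rightarrow> complex mat" where
  "measure_prepare n m T c x g X =
     mat m m (\<lambda>(r,s). \<Sum>t\<in>T. complex_of_real (c t) * (qf n X (x t) * g t r * cnj (g t s)))"

lemma sum_blocks:
  fixes f :: "nat \<Rightarrow> 'a::comm_monoid_add"
  shows "(\<Sum>i<k*m. f i) = (\<Sum>p<k. \<Sum>s<m. f (p*m+s))"
proof -
  have "(\<Sum>i<k*m. f i) = (\<Sum>p<k. sum f {p*m..<p*m+m})"
    using sum.nat_group[of f m k] by simp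
  also have "\<dots> = (\<Sum>p<k. \<Sum>s<m. f (p*m+s))"
  proof (rule sum.cong[OF refl])
    fix p
    have "sum f {p*m..<p*m+m} = (\<Sum>s = 0..<m. f (s + p*m))"
      using sum.shift_bounds_nat_ivl[of f 0 "p*m" m] by (simp add: add.commute)
    then show "sum f {p*m..<p*m+m} = (\<Sum>s<m. f (p*m+s))" by (simp add: atLeast0LessThan add.commute)
  qed
  finally show ?thesis .
qed

lemma block_index_bound: fixes p k s m :: nat shows "p < k \<Longrightarrow> s < m \<Longrightarrow> p * m + s < k * m"
proof -
  assume "p < k" "s < m"
  then have "p * m + s < Suc p * m" by simp
  also have "\<dots> \<le> k * m" using \<open>p < k\<close> by (intro mult_le_mono1) simp
  finally show ?thesis .
qed

definition blk :: "nat \<Rightarrow> complex mat \<Rightarrow> nat \<Rightarrow> nat \<Rightarrow> complex mat" where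
  "blk n X p q = mat n n (\<lambda>(r, s). X $$ (p * n + r, q * n + s))"

text \<open>The quadratic form of one ampliated measure-and-prepare term equals the quadratic form of the
  original block matrix at the vector \<open>y\<close> with blocks \<open>\<langle>g, w\<^sub>p\<rangle> x\<close>; this is why such terms preserve
  positive semidefiniteness under every ampliation.\<close>
lemma ampliated_term_qf:
  fixes k m n :: nat and g :: "nat \<Rightarrow> complex" and x w :: "complex vec"
  defines "z \<equiv> (\<lambda>p. \<Sum>s<m. cnj (g s) * w $ (p*m+s))"
  defines "y \<equiv> vec (k*n) (\<lambda>i. z (i div n) * x $ (i mod n))"
  shows "(\<Sum>i<k*m. \<Sum>j<k*m. cnj (w $ i) * (qf n (blk n X (i div m) (j div m)) x
            * g (i mod m) * cnj (g (j mod m))) * w $ j)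
    = qf (k*n) X y"
proof -
  let ?Q = "\<lambda>p q. qf n (blk n X p q) x"
  have "(\<Sum>i<k*m. \<Sum>j<k*m. cnj (w $ i) * (?Q (i div m) (j div m) * g (i mod m) * cnj (g (j mod m))) * w $ j)
    = (\<Sum>p<k. \<Sum>q<k. \<Sum>r<m. \<Sum>s<m. cnj (w $ (p*m+r)) * (?Q p q * g r * cnj (g s)) * w $ (q*m+s))"
    by (simp add: sum_blocks sum.swap[of _ "{..<m}" "{..<k}"])
  also have "\<dots> = (\<Sum>p<k. \<Sum>q<k. cnj (z p) * ?Q p q * z q)"
    unfolding z_def by (simp add: cnj_sum sum_distrib_left sum_distrib_right mult_ac)
  also have "\<dots> = qf (k*n) X y"
  proof -
    have yi: "y $ (p*n+a) = z p * x $ a" if "p < k" "a < n" for p a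
      unfolding y_def using block_index_bound[OF that] that by simp
    have "qf (k*n) X y = (\<Sum>p<k. \<Sum>q<k. \<Sum>a<n. \<Sum>b<n.
        cnj (y $ (p*n+a)) * X $$ (p*n+a, q*n+b) * y $ (q*n+b))"
      unfolding qf_def by (simp add: sum_blocks sum.swap[of _ "{..<n}" "{..<k}"])
    also have "\<dots> = (\<Sum>p<k. \<Sum>q<k. \<Sum>a<n. \<Sum>b<n.
        cnj (z p) * (cnj (x $ a) * X $$ (p*n+a, q*n+b) * x $ b) * z q)"
      by (intro sum.cong[OF refl]) (simp add: yi mult_ac)
    also have "\<dots> = (\<Sum>p<k. \<Sum>q<k. cnj (z p) * ?Q p q * z q)"
      unfolding qf_def blk_def by (simp add: sum_distrib_left sum_distrib_right)
    finally show ?thesis by simp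
  qed
  finally show ?thesis .
qed

lemma measure_prepare_linear: "linear_map_mat n m (measure_prepare n m T c x g)"
  unfolding linear_map_mat_def
proof (intro conjI ballI allI)
  fix X Y :: "complex mat" assume X: "X \<in> carrier_mat n n" and Y: "Y \<in> carrier_mat n n"
  show "measure_prepare n m T c x g (X + Y) = measure_prepare n m T c x g X + measure_prepare n m T c x g Y"
    using X Y by (intro eq_matI)
      (auto simp: measure_prepare_def qf_add distrib_left distrib_right sum.distrib)
next
  fix a :: complex and X :: "complex mat" assume X: "X \<in> carrier_mat n n"
  show "measure_prepare n m T c x g (a \<cdot>\<^sub>m X) = a \<cdot>\<^sub>m measure_prepare n m T c x g X"
    using X by (intro eq_matI) (auto simp: measure_prepare_def qf_smult sum_distrib_left mult_ac)
qed (simp add: measure_prepare_def)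

lemma qf_ampliation_measure_prepare:
  fixes k n m :: nat and x :: "'a \<Rightarrow> complex vec" and g :: "'a \<Rightarrow> nat \<Rightarrow> complex" and w :: "complex vec"
  defines "y \<equiv> \<lambda>t. vec (k*n) (\<lambda>i. (\<Sum>s<m. cnj (g t s) * w $ ((i div n)*m+s)) * x t $ (i mod n))"
  shows "qf (k*m) (ampliation k n m (measure_prepare n m T c x g) X) w
    = (\<Sum>t\<in>T. complex_of_real (c t) * qf (k*n) X (y t))"
proof -
  let ?F = "\<lambda>t i j. qf n (blk n X (i div m) (j div m)) (x t) * g t (i mod m) * cnj (g t (j mod m))"
  let ?M = "ampliation k n m (measure_prepare n m T c x g) X"
  have entry: "?M $$ (i,j) = (\<Sum>t\<in>T. complex_of_real (c t) * ?F t i j)"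
    if "i < k * m" "j < k * m" for i j
  proof -
    have "m > 0" using that by (cases m) auto
    then have "i mod m < m" "j mod m < m" by auto
    then show ?thesis using that unfolding ampliation_def blk_def measure_prepare_def by simp
  qed
  have "qf (k*m) ?M w = (\<Sum>i<k*m. \<Sum>j<k*m. cnj (w $ i) * ?M $$ (i,j) * w $ j)"
    by (simp only: qf_def)
  also have "\<dots> = (\<Sum>i<k*m. \<Sum>j<k*m. cnj (w $ i) * (\<Sum>t\<in>T. complex_of_real (c t) * ?F t i j) * w $ j)"
    by (intro sum.cong[OF refl]) (simp only: entry lessThan_iff)
  also have "\<dots> = (\<Sum>i<k*m. \<Sum>j<k*m. \<Sum>t\<in>T. cnj (w $ i) * (complex_of_real (c t) * ?F t i j) * w $ j)"
    by (simp add: sum_distrib_left sum_distrib_right)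
  also have "\<dots> = (\<Sum>t\<in>T. \<Sum>i<k*m. \<Sum>j<k*m. cnj (w $ i) * (complex_of_real (c t) * ?F t i j) * w $ j)"
    by (subst sum.swap, rule sum.swap)
  also have "\<dots> = (\<Sum>t\<in>T. complex_of_real (c t) * (\<Sum>i<k*m. \<Sum>j<k*m. cnj (w $ i) * ?F t i j * w $ j))"
    by (simp add: sum_distrib_left mult_ac)
  also have "\<dots> = (\<Sum>t\<in>T. complex_of_real (c t) * qf (k*n) X (y t))"
    unfolding y_def by (simp add: ampliated_term_qf)
  finally show ?thesis .
qed

theorem measure_prepare_cp:
  assumes c: "\<And>t. t \<in> T \<Longrightarrow> c t \<ge> 0"
  shows "completely_positive n m (measure_prepare n m T c x g)"
  unfolding completely_positive_def
proof (intro conjI allI impI measure_prepare_linear)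
  fix k and X :: "complex mat" assume psd: "psd_mat (k * n) X"
  show "psd_mat (k * m) (ampliation k n m (measure_prepare n m T c x g) X)" unfolding psd_iff
  proof (intro conjI ballI)
    show "ampliation k n m (measure_prepare n m T c x g) X \<in> carrier_mat (k * m) (k * m)"
      by (simp add: ampliation_def)
    fix w :: "complex vec"
    have "complex_of_real (c t) * qf (k*n) X y \<ge> 0" if "t \<in> T" "y \<in> carrier_vec (k*n)" for t y
      using psd c[OF that(1)] that(2) unfolding psd_iff by (simp add: less_eq_complex_def)
    then show "qf (k*m) (ampliation k n m (measure_prepare n m T c x g) X) w \<ge> 0"
      unfolding qf_ampliation_measure_prepare by (intro sum_nonneg) simp
  qed
qed

section \<open>Sufficiency: a completely positive map realising a nonnegative matrix\<close>

lemma diagonal_conj_entry: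
  assumes V: "V \<in> carrier_mat m m" and E: "E \<in> carrier_mat m m" "diagonal_mat E"
    and r: "r < m" and s: "s < m"
  shows "(V * E * adj V) $$ (r,s) = (\<Sum>l<m. E $$ (l,l) * V $$ (r,l) * cnj (V $$ (s,l)))"
proof -
  have "(V * E) $$ (r,l) = V $$ (r,l) * E $$ (l,l)" if l: "l < m" for l
  proof -
    have "(V * E) $$ (r,l) = (\<Sum>t<m. V $$ (r,t) * E $$ (t,l))"
      using V E r l by (simp add: scalar_prod_def atLeast0LessThan)
    also have "\<dots> = (\<Sum>t<m. if t = l then V $$ (r,l) * E $$ (l,l) else 0)"
      using E l unfolding diagonal_mat_def by (intro sum.cong refl) auto
    finally show ?thesis using l by simp
  qed
  moreover have "(V * E * adj V) $$ (r,s) = (\<Sum>l<m. (V * E) $$ (r,l) * adj V $$ (l,s))"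
    using V E r s by (simp add: scalar_prod_def atLeast0LessThan)
  ultimately show ?thesis using V s by (simp add: mult_ac)
qed

lemma qf_unit_eigenvector:
  assumes "X \<in> carrier_mat n n" "v \<in> carrier_vec n" "conjugate v \<bullet> v = 1" "X *\<^sub>v v = e \<cdot>\<^sub>v v"
  shows "qf n X v = e"
  using assms by (simp add: qf_inner)

lemma unit_eigenvectors:
  assumes A: "A \<in> carrier_mat n n" and ev: "eigenvalues_are n A a"
  obtains x where "\<And>i. i < n \<Longrightarrow> x i \<in> carrier_vec n" "\<And>i. i < n \<Longrightarrow> conjugate (x i) \<bullet> x i = 1"
    "\<And>i. i < n \<Longrightarrow> A *\<^sub>v x i = complex_of_real (a i) \<cdot>\<^sub>v x i"
proof -
  have "\<forall>i. \<exists>v. i < n \<longrightarrow> v \<in> carrier_vec n \<and> v \<bullet>c v = 1 \<and> A *\<^sub>v v = complex_of_real (a i) \<cdot>\<^sub>v v"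
    using unit_eigenvector[OF A listed_eigenvalue[OF A ev]] by blast
  then obtain x where x: "\<And>i. i < n \<Longrightarrow> x i \<in> carrier_vec n \<and> x i \<bullet>c x i = 1
      \<and> A *\<^sub>v x i = complex_of_real (a i) \<cdot>\<^sub>v x i" by metis
  have "conjugate (x i) \<bullet> x i = 1" if "i < n" for i
    using x[OF that] comm_scalar_prod[of "x i" n "conjugate (x i)"] by simp
  with x show ?thesis using that by blast
qed

lemma measure_prepare_diagonal:
  fixes D :: "real mat" and x :: "nat \<Rightarrow> complex vec" and \<sigma> :: "nat \<Rightarrow> nat"
  assumes V: "V \<in> carrier_mat m m" and E: "E \<in> carrier_mat m m" "diagonal_mat E"
    and w: "\<And>l. l < m \<Longrightarrow> (\<Sum>i<n. complex_of_real (D $$ (i, \<sigma> l)) * qf n X (x i)) = E $$ (l,l)"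
  shows "measure_prepare n m ({..<n} \<times> {..<m}) (\<lambda>(i,l). D $$ (i, \<sigma> l)) (\<lambda>(i,l). x i)
      (\<lambda>(i,l) r. V $$ (r,l)) X = V * E * adj V"
proof (rule eq_matI)
  fix r s assume "r < dim_row (V * E * adj V)" "s < dim_col (V * E * adj V)"
  then have r: "r < m" and s: "s < m" using V by auto
  have "measure_prepare n m ({..<n} \<times> {..<m}) (\<lambda>(i,l). D $$ (i, \<sigma> l)) (\<lambda>(i,l). x i)
      (\<lambda>(i,l) r. V $$ (r,l)) X $$ (r,s)
    = (\<Sum>i<n. \<Sum>l<m. complex_of_real (D $$ (i, \<sigma> l)) * (qf n X (x i) * V $$ (r,l) * cnj (V $$ (s,l))))"
    using r s by (simp add: measure_prepare_def sum.cartesian_product split_beta)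
  also have "\<dots> = (\<Sum>l<m. (\<Sum>i<n. complex_of_real (D $$ (i, \<sigma> l)) * qf n X (x i)) * V $$ (r,l) * cnj (V $$ (s,l)))"
    by (subst sum.swap) (simp add: sum_distrib_right mult.assoc)
  also have "\<dots> = (V * E * adj V) $$ (r,s)"
    using w diagonal_conj_entry[OF V E r s] by simp
  finally show "measure_prepare n m ({..<n} \<times> {..<m}) (\<lambda>(i,l). D $$ (i, \<sigma> l)) (\<lambda>(i,l). x i)
      (\<lambda>(i,l) r. V $$ (r,l)) X $$ (r,s) = (V * E * adj V) $$ (r,s)" .
qed (use V in \<open>auto simp: measure_prepare_def\<close>)

text \<open>Direction (b) \<Rightarrow> (a), and (b') \<Rightarrow> (a'): diagonalise \<open>B = V E V\<^sup>*\<close> with \<open>E\<^sub>l\<^sub>l = b\<^sub>\<sigma>\<^sub>(\<^sub>l\<^sub>)\<close> and take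
  unit eigenvectors \<open>x\<^sub>i\<close> of \<open>A\<close>; the measure-and-prepare map above sends \<open>A\<close> to \<open>V E V\<^sup>* = B\<close> since
  \<open>\<Sum>\<^sub>i a\<^sub>i D\<^sub>i\<^sub>,\<^sub>\<sigma>\<^sub>(\<^sub>l\<^sub>) = b\<^sub>\<sigma>\<^sub>(\<^sub>l\<^sub>)\<close>, and sends \<open>I\<close> to \<open>V V\<^sup>* = I\<close> when the columns of \<open>D\<close> sum to one.\<close>
theorem nonneg_realization_cp:
  assumes hA: "hermitian_mat n A" and hB: "hermitian_mat m B"
    and evA: "eigenvalues_are n A a" and evB: "eigenvalues_are m B b"
    and D: "nonneg_mat n m D" and rt: "row_times n m a D b"
  shows "\<exists>\<Phi>. completely_positive n m \<Phi> \<and> \<Phi> A = B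
           \<and> ((\<forall>j<m. (\<Sum>i<n. D $$ (i,j)) = 1) \<longrightarrow> unital n m \<Phi>)"
proof -
  have A: "A \<in> carrier_mat n n" using hA by (rule hermitian_carrier)
  obtain x where x: "\<And>i. i < n \<Longrightarrow> x i \<in> carrier_vec n" "\<And>i. i < n \<Longrightarrow> conjugate (x i) \<bullet> x i = 1"
    and Ax: "\<And>i. i < n \<Longrightarrow> A *\<^sub>v x i = complex_of_real (a i) \<cdot>\<^sub>v x i"
    using unit_eigenvectors[OF A evA] by blast
  obtain V E where uV: "unitary m V" and E: "E \<in> carrier_mat m m" "diagonal_mat E"
    and BV: "B = V * E * adj V" and El: "\<And>l. l < m \<Longrightarrow> \<exists>j<m. E $$ (l,l) = complex_of_real (b j)"
    using spectral_listed[OF hB evB] by blast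
  obtain \<sigma> where \<sigma>: "\<And>l. l < m \<Longrightarrow> \<sigma> l < m \<and> E $$ (l,l) = complex_of_real (b (\<sigma> l))"
    using El by metis
  have V: "V \<in> carrier_mat m m" using uV unfolding unitary_def by auto
  define \<Phi> where "\<Phi> = measure_prepare n m ({..<n} \<times> {..<m}) (\<lambda>(i,l). D $$ (i, \<sigma> l))
      (\<lambda>(i,l). x i) (\<lambda>(i,l) r. V $$ (r,l))"
  have "completely_positive n m \<Phi>"
    unfolding \<Phi>_def using D \<sigma> by (intro measure_prepare_cp) (auto simp: nonneg_mat_def)
  moreover have "\<Phi> A = B" unfolding \<Phi>_def BV
  proof (rule measure_prepare_diagonal[OF V E])
    fix l assume l: "l < m"
    have "(\<Sum>i<n. complex_of_real (D $$ (i, \<sigma> l)) * qf n A (x i)) = complex_of_real (\<Sum>i<n. a i * D $$ (i, \<sigma> l))"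
      using qf_unit_eigenvector[OF A x(1,2) Ax] by (simp add: mult.commute)
    then show "(\<Sum>i<n. complex_of_real (D $$ (i, \<sigma> l)) * qf n A (x i)) = E $$ (l,l)"
      using rt \<sigma>[OF l] unfolding row_times_def by simp
  qed
  moreover have "unital n m \<Phi>" if cs: "\<forall>j<m. (\<Sum>i<n. D $$ (i,j)) = 1"
  proof -
    have "\<Phi> (1\<^sub>m n) = V * 1\<^sub>m m * adj V" unfolding \<Phi>_def
    proof (rule measure_prepare_diagonal[OF V one_carrier_mat])
      fix l assume l: "l < m"
      have "(\<Sum>i<n. complex_of_real (D $$ (i, \<sigma> l)) * qf n (1\<^sub>m n) (x i)) = complex_of_real (\<Sum>i<n. D $$ (i, \<sigma> l))"
      proof -
        have "qf n (1\<^sub>m n) (x i) = 1" if "i < n" for i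
          using qf_unit_eigenvector[OF one_carrier_mat x(1,2)[OF that], of 1] x(1)[OF that] by simp
        then show ?thesis by simp
      qed
      then show "(\<Sum>i<n. complex_of_real (D $$ (i, \<sigma> l)) * qf n (1\<^sub>m n) (x i)) = 1\<^sub>m m $$ (l,l)"
        using cs \<sigma>[OF l] l by simp
    qed (simp add: diagonal_mat_def)
    then show ?thesis unfolding unital_def using unitary_right[OF uV] V by simp
  qed
  ultimately show ?thesis by blast
qed

section \<open>The scalar conditions\<close>

text \<open>\<open>b\<close> has the sign of \<open>a\<close> whenever \<open>a\<close> has constant sign.  This is what (b) and (c) both
  express.\<close>
definition sign_compatible :: "nat \<Rightarrow> nat \<Rightarrow> (nat \<Rightarrow> real) \<Rightarrow> (nat \<Rightarrow> real) \<Rightarrow> bool" where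
  "sign_compatible n m a b \<longleftrightarrow>
     ((\<forall>i<n. a i \<ge> 0) \<longrightarrow> (\<forall>j<m. b j \<ge> 0)) \<and> ((\<forall>i<n. a i \<le> 0) \<longrightarrow> (\<forall>j<m. b j \<le> 0))"

lemma extreme_values:
  fixes a :: "nat \<Rightarrow> real" assumes "n > 0"
  shows "\<exists>i<n. a i = Max (a ` {..<n})" "\<exists>i<n. a i = Min (a ` {..<n})"
    "\<And>i. i < n \<Longrightarrow> Min (a ` {..<n}) \<le> a i \<and> a i \<le> Max (a ` {..<n})"
proof -
  have ne: "a ` {..<n} \<noteq> {}" using assms by auto
  show "\<exists>i<n. a i = Max (a ` {..<n})" using Max_in[OF _ ne] by auto
  show "\<exists>i<n. a i = Min (a ` {..<n})" using Min_in[OF _ ne] by auto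
  show "Min (a ` {..<n}) \<le> a i \<and> a i \<le> Max (a ` {..<n})" if "i < n" for i using that by auto
qed

lemma sign_compatible_extremes:
  assumes "n > 0"
  shows "sign_compatible n m a b \<longleftrightarrow>
    (Min (a ` {..<n}) \<ge> 0 \<longrightarrow> (\<forall>j<m. b j \<ge> 0)) \<and> (Max (a ` {..<n}) \<le> 0 \<longrightarrow> (\<forall>j<m. b j \<le> 0))"
proof -
  have "a ` {..<n} \<noteq> {}" using assms by auto
  then have "(\<forall>i<n. a i \<ge> 0) \<longleftrightarrow> Min (a ` {..<n}) \<ge> 0" "(\<forall>i<n. a i \<le> 0) \<longleftrightarrow> Max (a ` {..<n}) \<le> 0"
    by (auto simp: Min_ge_iff Max_le_iff)
  then show ?thesis unfolding sign_compatible_def by simp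
qed

text \<open>A nonnegative matrix supported on two rows \<open>i\<^sub>1, i\<^sub>2\<close>: every column of \<open>aD\<close> is a nonnegative
  combination of \<open>a\<^sub>i\<^sub>1\<close> and \<open>a\<^sub>i\<^sub>2\<close>.  Both realisations below are of this form, with the rows of the largest
  and the smallest entry of \<open>a\<close>.\<close>
definition two_row_mat :: "nat \<Rightarrow> nat \<Rightarrow> nat \<Rightarrow> nat \<Rightarrow> (nat \<Rightarrow> real) \<Rightarrow> (nat \<Rightarrow> real) \<Rightarrow> real mat" where
  "two_row_mat n m i1 i2 p q = mat n m (\<lambda>(i,j). (if i = i1 then p j else 0) + (if i = i2 then q j else 0))"

lemma two_row_mat_sums:
  assumes "i1 < n" "i2 < n" "j < m"
  shows "(\<Sum>i<n. a i * two_row_mat n m i1 i2 p q $$ (i,j)) = a i1 * p j + a i2 * q j"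
    and "(\<Sum>i<n. two_row_mat n m i1 i2 p q $$ (i,j)) = p j + q j"
proof -
  have "(\<Sum>i<n. a i * two_row_mat n m i1 i2 p q $$ (i,j))
      = (\<Sum>i<n. (if i = i1 then a i * p j else 0) + (if i = i2 then a i * q j else 0))"
    using assms by (intro sum.cong) (auto simp: two_row_mat_def distrib_left)
  then show "(\<Sum>i<n. a i * two_row_mat n m i1 i2 p q $$ (i,j)) = a i1 * p j + a i2 * q j"
    using assms by (simp add: sum.distrib)
  have "(\<Sum>i<n. two_row_mat n m i1 i2 p q $$ (i,j))
      = (\<Sum>i<n. (if i = i1 then p j else 0) + (if i = i2 then q j else 0))"
    using assms by (intro sum.cong) (auto simp: two_row_mat_def)
  then show "(\<Sum>i<n. two_row_mat n m i1 i2 p q $$ (i,j)) = p j + q j"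
    using assms by (simp add: sum.distrib)
qed

lemma two_row_mat_nonneg:
  "(\<And>j. j < m \<Longrightarrow> p j \<ge> 0 \<and> q j \<ge> 0) \<Longrightarrow> nonneg_mat n m (two_row_mat n m i1 i2 p q)"
  unfolding nonneg_mat_def two_row_mat_def by auto

text \<open>(b) \<Rightarrow> sign compatibility: \<open>b\<^sub>j\<close> is a nonnegative combination of the \<open>a\<^sub>i\<close>.\<close>
lemma nonneg_realization_sign_compatible:
  assumes D: "nonneg_mat n m D" and rt: "row_times n m a D b"
  shows "sign_compatible n m a b"
  unfolding sign_compatible_def
proof (intro conjI impI allI)
  fix j assume "\<forall>i<n. a i \<ge> 0" and j: "j < m"
  then have "(\<Sum>i<n. a i * D $$ (i, j)) \<ge> 0" using D unfolding nonneg_mat_def by (intro sum_nonneg) auto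
  then show "b j \<ge> 0" using rt j unfolding row_times_def by simp
next
  fix j assume "\<forall>i<n. a i \<le> 0" and j: "j < m"
  then have "(\<Sum>i<n. a i * D $$ (i, j)) \<le> 0"
    using D unfolding nonneg_mat_def by (intro sum_nonpos) (auto simp: mult_nonpos_nonneg)
  then show "b j \<le> 0" using rt j unfolding row_times_def by simp
qed

text \<open>Sign compatibility \<Rightarrow> (b): write \<open>b\<^sub>j = max(b\<^sub>j,0) + min(b\<^sub>j,0)\<close> and realise the positive part
  from the largest and the negative part from the smallest entry of \<open>a\<close>.\<close>
lemma sign_compatible_nonneg_realization:
  fixes a b :: "nat \<Rightarrow> real" assumes n: "n > 0" and sc: "sign_compatible n m a b"
  shows "\<exists>D. nonneg_mat n m D \<and> row_times n m a D b"
proof -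
  define M where "M = Max (a ` {..<n})"
  define N where "N = Min (a ` {..<n})"
  obtain i1 i2 where i1: "i1 < n" "a i1 = M" and i2: "i2 < n" "a i2 = N"
    using extreme_values(1,2)[OF n, where a=a] M_def N_def by metis
  have bpos: "N \<ge> 0 \<Longrightarrow> j < m \<Longrightarrow> b j \<ge> 0" and bneg: "M \<le> 0 \<Longrightarrow> j < m \<Longrightarrow> b j \<le> 0" for j
    using sc unfolding sign_compatible_extremes[OF n] M_def N_def by auto
  define p where "p j = max (b j) 0 / M" for j
  define q where "q j = min (b j) 0 / N" for j
  have "p j \<ge> 0 \<and> q j \<ge> 0" if "j < m" for j
    using bpos[OF _ that] bneg[OF _ that] unfolding p_def q_def
    by (cases "M \<ge> 0"; cases "N \<le> 0") (auto simp: divide_nonpos_nonpos)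
  moreover have "b j = M * p j + N * q j" if "j < m" for j
    using bpos[OF _ that] bneg[OF _ that] unfolding p_def q_def
    by (cases "M = 0"; cases "N = 0") auto
  ultimately show ?thesis
    using i1 i2 two_row_mat_sums(1)[OF i1(1) i2(1)] two_row_mat_nonneg
    unfolding row_times_def by (intro exI[of _ "two_row_mat n m i1 i2 p q"]) auto
qed

lemma sign_compatible_iff_scaled_range:
  fixes a b :: "nat \<Rightarrow> real" assumes n: "n > 0"
  shows "sign_compatible n m a b \<longleftrightarrow> (\<exists>\<gamma>1 \<gamma>2 :: real. \<gamma>1 \<ge> 0 \<and> \<gamma>2 \<ge> 0 \<and>
           (\<forall>j<m. \<gamma>2 * Min (a ` {..<n}) \<le> b j \<and> b j \<le> \<gamma>1 * Max (a ` {..<n})))"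
proof
  define M where "M = Max (a ` {..<n})"
  define N where "N = Min (a ` {..<n})"
  assume "sign_compatible n m a b"
  then have bpos: "N \<ge> 0 \<Longrightarrow> j < m \<Longrightarrow> b j \<ge> 0" and bneg: "M \<le> 0 \<Longrightarrow> j < m \<Longrightarrow> b j \<le> 0" for j
    unfolding sign_compatible_extremes[OF n] M_def N_def by auto
  define R where "R = (\<Sum>j<m. \<bar>b j\<bar>)"
  have R: "j < m \<Longrightarrow> \<bar>b j\<bar> \<le> R" for j unfolding R_def by (rule member_le_sum) auto
  have "R \<ge> 0" unfolding R_def by (simp add: sum_nonneg)
  define \<gamma>1 where "\<gamma>1 = (if M > 0 then R / M else 0)"
  define \<gamma>2 where "\<gamma>2 = (if N < 0 then R / (- N) else 0)"
  have "\<gamma>1 \<ge> 0" "\<gamma>2 \<ge> 0" unfolding \<gamma>1_def \<gamma>2_def using \<open>R \<ge> 0\<close> by (auto simp: divide_nonneg_neg)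
  moreover have "\<gamma>2 * N \<le> b j \<and> b j \<le> \<gamma>1 * M" if j: "j < m" for j
    using R[OF j] bpos[OF _ j] bneg[OF _ j] unfolding \<gamma>1_def \<gamma>2_def
    by (cases "M > 0"; cases "N < 0") auto
  ultimately show "\<exists>\<gamma>1 \<gamma>2 :: real. \<gamma>1 \<ge> 0 \<and> \<gamma>2 \<ge> 0 \<and>
      (\<forall>j<m. \<gamma>2 * Min (a ` {..<n}) \<le> b j \<and> b j \<le> \<gamma>1 * Max (a ` {..<n}))"
    unfolding M_def N_def by blast
next
  assume "\<exists>\<gamma>1 \<gamma>2 :: real. \<gamma>1 \<ge> 0 \<and> \<gamma>2 \<ge> 0 \<and>
      (\<forall>j<m. \<gamma>2 * Min (a ` {..<n}) \<le> b j \<and> b j \<le> \<gamma>1 * Max (a ` {..<n}))"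
  then obtain \<gamma>1 \<gamma>2 :: real where "\<gamma>1 \<ge> 0" "\<gamma>2 \<ge> 0"
    and g: "\<And>j. j < m \<Longrightarrow> \<gamma>2 * Min (a ` {..<n}) \<le> b j \<and> b j \<le> \<gamma>1 * Max (a ` {..<n})" by blast
  then show "sign_compatible n m a b" unfolding sign_compatible_extremes[OF n]
    by (meson g mult_nonneg_nonneg mult_nonneg_nonpos order_trans)
qed

text \<open>(b') \<Rightarrow> (c'): a column stochastic matrix forms convex combinations.\<close>
lemma stochastic_realization_in_range:
  fixes a b :: "nat \<Rightarrow> real"
  assumes n: "n > 0" and D: "column_stochastic n m D" and rt: "row_times n m a D b" and j: "j < m"
  shows "Min (a ` {..<n}) \<le> b j \<and> b j \<le> Max (a ` {..<n})"
proof -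
  have nn: "i < n \<Longrightarrow> D $$ (i,j) \<ge> 0" for i
    using D j unfolding column_stochastic_def nonneg_mat_def by auto
  have cs: "(\<Sum>i<n. D $$ (i, j)) = 1" using D j unfolding column_stochastic_def by auto
  have bj: "b j = (\<Sum>i<n. a i * D $$ (i, j))" using rt j unfolding row_times_def by auto
  have "(\<Sum>i<n. Min (a ` {..<n}) * D $$ (i, j)) \<le> b j" "b j \<le> (\<Sum>i<n. Max (a ` {..<n}) * D $$ (i, j))"
    unfolding bj using nn extreme_values(3)[OF n] by (auto intro!: sum_mono mult_right_mono)
  then show ?thesis using cs by (simp add: sum_distrib_left[symmetric])
qed

text \<open>(c') \<Rightarrow> (b'): \<open>b\<^sub>j\<close> is a convex combination of the largest and the smallest entry of \<open>a\<close>.\<close>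
lemma in_range_stochastic_realization:
  fixes a b :: "nat \<Rightarrow> real"
  assumes n: "n > 0" and range: "\<forall>j<m. Min (a ` {..<n}) \<le> b j \<and> b j \<le> Max (a ` {..<n})"
  shows "\<exists>D. column_stochastic n m D \<and> row_times n m a D b"
proof -
  define M where "M = Max (a ` {..<n})"
  define N where "N = Min (a ` {..<n})"
  obtain i1 i2 where i1: "i1 < n" "a i1 = M" and i2: "i2 < n" "a i2 = N"
    using extreme_values(1,2)[OF n, where a=a] M_def N_def by metis
  have hb: "j < m \<Longrightarrow> N \<le> b j \<and> b j \<le> M" for j using range M_def N_def by auto
  define \<theta> where "\<theta> j = (if M = N then 1 else (b j - N) / (M - N))" for j
  have \<theta>: "0 \<le> \<theta> j \<and> 0 \<le> 1 - \<theta> j \<and> b j = M * \<theta> j + N * (1 - \<theta> j)" if j: "j < m" for j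
  proof (cases "M = N")
    case False
    then have pos: "M - N > 0" using hb[OF j] by auto
    have t: "\<theta> j = (b j - N) / (M - N)" using False by (simp add: \<theta>_def)
    have "0 \<le> \<theta> j" "\<theta> j \<le> 1" using hb[OF j] pos by (simp_all add: t pos_divide_le_eq)
    moreover have "M * \<theta> j + N * (1 - \<theta> j) = N + \<theta> j * (M - N)" by (simp add: algebra_simps)
    moreover have "\<theta> j * (M - N) = b j - N" using pos by (simp add: t)
    ultimately show ?thesis by simp
  qed (use hb[OF j] in \<open>simp add: \<theta>_def\<close>)
  show ?thesis
    using \<theta> two_row_mat_sums[OF i1(1) i2(1), where p=\<theta> and q="\<lambda>j. 1 - \<theta> j"] i1 i2
      two_row_mat_nonneg[where p=\<theta> and q="\<lambda>j. 1 - \<theta> j"]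
    unfolding column_stochastic_def row_times_def
    by (intro exI[of _ "two_row_mat n m i1 i2 \<theta> (\<lambda>j. 1 - \<theta> j)"]) auto
qed

text \<open>(a) \<Rightarrow> sign compatibility: apply the spectral bound with \<open>(s,t) = (\<plusminus>1, 0)\<close>.\<close>
lemma cp_sign_compatible:
  assumes cp: "completely_positive n m \<Phi>" and PhiA: "\<Phi> A = B"
    and hA: "hermitian_mat n A" and hB: "hermitian_mat m B"
    and evA: "eigenvalues_are n A a" and evB: "eigenvalues_are m B b"
  shows "sign_compatible n m a b"
  unfolding sign_compatible_def
  using cp_preserves_spectral_bound[OF cp PhiA hA hB evA evB, of 1 0]
    cp_preserves_spectral_bound[OF cp PhiA hA hB evA evB, of "-1" 0]
  by auto

text \<open>(a') \<Rightarrow> (c'): apply the spectral bound to \<open>A - (min a) I \<ge> 0\<close> and \<open>(max a) I - A \<ge> 0\<close>.\<close>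
lemma ucp_in_range:
  assumes n: "n > 0" and cp: "completely_positive n m \<Phi>" and u: "unital n m \<Phi>" and PhiA: "\<Phi> A = B"
    and hA: "hermitian_mat n A" and hB: "hermitian_mat m B"
    and evA: "eigenvalues_are n A a" and evB: "eigenvalues_are m B b" and j: "j < m"
  shows "Min (a ` {..<n}) \<le> b j \<and> b j \<le> Max (a ` {..<n})"
  using cp_preserves_spectral_bound[OF cp PhiA hA hB evA evB _ _ j, of 1 "- Min (a ` {..<n})"]
    cp_preserves_spectral_bound[OF cp PhiA hA hB evA evB _ _ j, of "-1" "Max (a ` {..<n})"]
    u extreme_values(3)[OF n, where a=a] unfolding unital_def by auto

theorem theorem3p1:
  fixes n m :: nat and A B :: "complex mat" and a b :: "nat \<Rightarrow> real"
  assumes "n > 0" and "m > 0"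
    and "hermitian_mat n A" and "hermitian_mat m B"
    and "eigenvalues_are n A a" and "eigenvalues_are m B b"
  shows "((\<exists>\<Phi>. completely_positive n m \<Phi> \<and> \<Phi> A = B)
            \<longleftrightarrow> (\<exists>D. nonneg_mat n m D \<and> row_times n m a D b))
       \<and> ((\<exists>D. nonneg_mat n m D \<and> row_times n m a D b)
            \<longleftrightarrow> (\<exists>\<gamma>1 \<gamma>2 :: real. \<gamma>1 \<ge> 0 \<and> \<gamma>2 \<ge> 0 \<and>
                  (\<forall>j<m. \<gamma>2 * Min (a ` {..<n}) \<le> b j \<and> b j \<le> \<gamma>1 * Max (a ` {..<n}))))
       \<and> ((\<exists>\<Phi>. completely_positive n m \<Phi> \<and> unital n m \<Phi> \<and> \<Phi> A = B)
            \<longleftrightarrow> (\<exists>D. column_stochastic n m D \<and> row_times n m a D b))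
       \<and> ((\<exists>D. column_stochastic n m D \<and> row_times n m a D b)
            \<longleftrightarrow> (\<forall>j<m. Min (a ` {..<n}) \<le> b j \<and> b j \<le> Max (a ` {..<n})))"
proof -
  note n = assms(1) and spectra = assms(3-6)
  have nonneg_iff_sc: "(\<exists>D. nonneg_mat n m D \<and> row_times n m a D b) \<longleftrightarrow> sign_compatible n m a b"
    using nonneg_realization_sign_compatible sign_compatible_nonneg_realization[OF n] by blast
  have stoch_iff_range: "(\<exists>D. column_stochastic n m D \<and> row_times n m a D b)
      \<longleftrightarrow> (\<forall>j<m. Min (a ` {..<n}) \<le> b j \<and> b j \<le> Max (a ` {..<n}))"
    using stochastic_realization_in_range[OF n] in_range_stochastic_realization[OF n] by blast
  have "(\<exists>\<Phi>. completely_positive n m \<Phi> \<and> \<Phi> A = B) \<longleftrightarrow> sign_compatible n m a b"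
    using cp_sign_compatible[OF _ _ spectra] nonneg_realization_cp[OF spectra] nonneg_iff_sc by blast
  moreover have "(\<exists>\<Phi>. completely_positive n m \<Phi> \<and> unital n m \<Phi> \<and> \<Phi> A = B)
      \<longleftrightarrow> (\<exists>D. column_stochastic n m D \<and> row_times n m a D b)"
    using ucp_in_range[OF n _ _ _ spectra] nonneg_realization_cp[OF spectra] stoch_iff_range
    unfolding column_stochastic_def by blast
  ultimately show ?thesis
    using nonneg_iff_sc sign_compatible_iff_scaled_range[OF n] stoch_iff_range by blast
qed

end
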